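(* For every $\lambda>0$, the function $\tilde J_\lambda$, taking values in the extended reals $\mathbb R\cup\{+\infty\}$, is lower semicontinuous on $\overline{\mathfrak B_+^o}\times\overline{\mathfrak B_+^m}(E)$.
   Context: Let $m,n$ be positive integers, $V=\{1,\dots,m\}$, and $E\subseteq V\times V$ a symmetric set containing $(j,j)$ for all $j\in V$. Let $\mathbb T=[0,2\pi)$ and write $\int_{\mathbb T}f$ for $\int_0^{2\pi}f(\theta)\,\frac{d\theta}{2\pi}$. $\mathfrak B_+^m(E)$ is the set of matrix trigonometric polynomials $\mathbf Q(e^{i\theta})=Q_0+\frac12\sum_{k=1}^n\big(Q_ke^{-i\theta k}+Q_k^Te^{i\theta k}\big)$ with $Q_0\in\mathbb R^{m\times m}$ symmetric, $Q_1,\dots,Q_n\in\mathbb R^{m\times m}$, $[Q_k]_{jh}=0$ for all $k$ and all $(j,h)\notin E$, and $\mathbf Q(e^{i\theta})$ positive definite for every $\theta\in\mathbb T$. $\overline{\mathfrak B_+^m}(E)$ denotes the closure of $\mathfrak B_+^m(E)$ (in the finite-dimensional coefficient space) from which the points $\mathbf Q$ with $\det\mathbf Q(e^{i\theta})=0$ for all $\theta\in\mathbb T$ are removed. $\mathfrak B_+^o$ is the set of scalar trigonometric polynomials $\mathbf p(e^{i\theta})=1+\frac12\sum_{k=1}^n p_k(e^{-i\theta k}+e^{i\theta k})$, $p_k\in\mathbb R$, with $\mathbf p(e^{i\theta})>0$ for all $\theta$; $\overline{\mathfrak B_+^o}$ is its closure. Set $p_0=1$. Data: real $m\times m$ matrices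 $R_0,\dots,R_n$ ($R_0$ symmetric) and real numbers $c_0,\dots,c_n$. Define $$J(\mathbf p,\mathbf Q)=\int_{\mathbb T}\Big(\mathbf p\log\det(\mathbf p\mathbf Q^{-1})-m\mathbf p\Big)+\sum_{k=0}^n\mathrm{tr}(Q_k^TR_k)-\sum_{k=0}^np_kc_k,$$ $g_\lambda(\mathbf p)=\lambda\int_{\mathbb T}\mathbf p^{-1}$, and $\tilde J_\lambda=J+g_\lambda$ (integrals possibly equal to $+\infty$). *)

theory Defs
  imports "HOL-Analysis.Analysis"
begin

text \<open>Coefficients are represented as sequences indexed by nat; only the indices
  0..n are meaningful, the others are required to vanish.  The ambient space
  nat => ... carries the product topology (pointwise convergence), which on the
  subspace of sequences vanishing beyond n is the usual Euclidean topology.\<close>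

definition trig_p :: "nat \<Rightarrow> (nat \<Rightarrow> real) \<Rightarrow> real \<Rightarrow> real" where
  "trig_p n p \<theta> = Re (complex_of_real (p 0) + (1/2) * (\<Sum>k\<in>{1..n}.
       complex_of_real (p k) * (exp (- \<i> * of_nat k * of_real \<theta>) + exp (\<i> * of_nat k * of_real \<theta>))))"

definition trig_Q :: "nat \<Rightarrow> (nat \<Rightarrow> real^'m^'m) \<Rightarrow> real \<Rightarrow> complex^'m^'m" where
  "trig_Q n Q \<theta> = (\<chi> j h. complex_of_real (Q 0 $ j $ h) + (1/2) * (\<Sum>k\<in>{1..n}.
       complex_of_real (Q k $ j $ h) * exp (- \<i> * of_nat k * of_real \<theta>)
     + complex_of_real (transpose (Q k) $ j $ h) * exp (\<i> * of_nat k * of_real \<theta>)))"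

definition pos_def_cmat :: "complex^'m^'m \<Rightarrow> bool" where
  "pos_def_cmat A \<longleftrightarrow> (\<forall>z::complex^'m. z \<noteq> 0 \<longrightarrow>
     (let q = (\<Sum>j\<in>UNIV. \<Sum>h\<in>UNIV. cnj (z $ j) * A $ j $ h * z $ h) in Im q = 0 \<and> Re q > 0))"

definition Bo :: "nat \<Rightarrow> (nat \<Rightarrow> real) set" where
  "Bo n = {p. p 0 = 1 \<and> (\<forall>k>n. p k = 0) \<and> (\<forall>\<theta>\<in>{0..<2*pi}. trig_p n p \<theta> > 0)}"

definition Bm :: "nat \<Rightarrow> ('m \<times> 'm) set \<Rightarrow> (nat \<Rightarrow> real^'m^'m) set" where
  "Bm n E = {Q. transpose (Q 0) = Q 0 \<and> (\<forall>k>n. Q k = 0)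
      \<and> (\<forall>k j h. (j, h) \<notin> E \<longrightarrow> Q k $ j $ h = 0)
      \<and> (\<forall>\<theta>\<in>{0..<2*pi}. pos_def_cmat (trig_Q n Q \<theta>))}"

definition Bo_bar :: "nat \<Rightarrow> (nat \<Rightarrow> real) set" where
  "Bo_bar n = closure (Bo n)"

definition Bm_bar :: "nat \<Rightarrow> ('m \<times> 'm) set \<Rightarrow> (nat \<Rightarrow> real^'m^'m) set" where
  "Bm_bar n E = closure (Bm n E) - {Q. \<forall>\<theta>\<in>{0..<2*pi}. det (trig_Q n Q \<theta>) = 0}"

text \<open>Normalized integral over T = [0,2pi) with respect to d theta / (2 pi) of an extended-real
  valued function, defined as (positive part) - (negative part) in the extended reals.
  (For the integrands below the negative part is finite, so the value lies in R \<union> {+\<infinity>}.)\<close>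
definition intT :: "(real \<Rightarrow> ereal) \<Rightarrow> ereal" where
  "intT f = ereal (1 / (2*pi)) *
     (enn2ereal (\<integral>\<^sup>+ \<theta>\<in>{0..<2*pi}. e2ennreal (max 0 (f \<theta>)) \<partial>lborel)
    - enn2ereal (\<integral>\<^sup>+ \<theta>\<in>{0..<2*pi}. e2ennreal (max 0 (- f \<theta>)) \<partial>lborel))"

text \<open>Integrand p log det(p Q^{-1}) - m p.  Where p(e^{i theta}) > 0 and Q(e^{i theta}) is
  invertible this is the literal formula; at the finitely many remaining points (a null set,
  so the choice does not affect the integral) we use the conventions 0 log(...) = 0 and
  log det(p Q^{-1}) = +\<infinity> when det Q = 0.\<close>
definition J_integrand :: "nat \<Rightarrow> (nat \<Rightarrow> real) \<Rightarrow> (nat \<Rightarrow> real^'m^'m) \<Rightarrow> real \<Rightarrow> ereal" where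
  "J_integrand n p Q \<theta> =
     (let pt = trig_p n p \<theta>; Qt = trig_Q n Q \<theta>; m = real CARD('m) in
      if pt > 0 \<and> det Qt \<noteq> 0 then
        ereal (pt * ln (Re (det (mat (complex_of_real pt) ** matrix_inv Qt))) - m * pt)
      else if pt = 0 then 0 else PInfty)"

definition J_fun :: "nat \<Rightarrow> (nat \<Rightarrow> real^'m^'m) \<Rightarrow> (nat \<Rightarrow> real)
    \<Rightarrow> (nat \<Rightarrow> real) \<Rightarrow> (nat \<Rightarrow> real^'m^'m) \<Rightarrow> ereal" where
  "J_fun n R c p Q = intT (J_integrand n p Q)
     + ereal (\<Sum>k\<in>{0..n}. trace (transpose (Q k) ** R k)) - ereal (\<Sum>k\<in>{0..n}. p k * c k)"

definition g_fun :: "nat \<Rightarrow> real \<Rightarrow> (nat \<Rightarrow> real) \<Rightarrow> ereal" where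
  "g_fun n lam p = ereal lam * intT (\<lambda>\<theta>. if trig_p n p \<theta> > 0 then ereal (1 / trig_p n p \<theta>) else PInfty)"

definition J_tilde :: "nat \<Rightarrow> (nat \<Rightarrow> real^'m^'m) \<Rightarrow> (nat \<Rightarrow> real) \<Rightarrow> real
    \<Rightarrow> (nat \<Rightarrow> real) \<times> (nat \<Rightarrow> real^'m^'m) \<Rightarrow> ereal" where
  "J_tilde n R c lam pQ = J_fun n R c (fst pQ) (snd pQ) + g_fun n lam (fst pQ)"

definition lsc_on :: "'a::topological_space set \<Rightarrow> ('a \<Rightarrow> 'b::linorder) \<Rightarrow> bool" where
  "lsc_on S f \<longleftrightarrow> (\<forall>a. openin (top_of_set S) {x\<in>S. a < f x})"

end

theory Submission
  imports Defs
begin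

text \<open>Lower semicontinuity is checked along convergent sequences of coefficients. Writing
  a = p(e^{i theta}) and d = det Q(e^{i theta}), the integrand of J depends only on (a, d).
  On the closures a is nonnegative and d is real and nonnegative, because Q(e^{i theta}) is a
  limit of positive definite Hermitian matrices, whose determinants are positive. On that
  region the integrand is lower semicontinuous in (a, d): it is +\<infinity> for a > 0 = d, and for
  a = 0 the bound a log a \<ge> -2 sqrt a pushes the liminf up to the value 0. Along a convergent
  sequence it is bounded below by one constant, since a and d stay bounded, so Fatou's lemma
  makes the integral lower semicontinuous. The integrand 1/a of g is even continuous as a map
  into [0, +\<infinity>], and the remaining terms of J are linear in the coefficients.\<close>

abbreviation period_interval :: "real set" where
  "period_interval \<equiv> {0..<2*pi}"

section \<open>Positive definite Hermitian matrices\<close>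

definition hermitian_cmat :: "complex^'m^'m \<Rightarrow> bool" where
  "hermitian_cmat A \<longleftrightarrow> (\<forall>i j. A$i$j = cnj (A$j$i))"

definition cquad_form :: "complex^'m^'m \<Rightarrow> complex^'m \<Rightarrow> complex" where
  "cquad_form A z = (\<Sum>j\<in>UNIV. \<Sum>h\<in>UNIV. cnj (z $ j) * A $ j $ h * z $ h)"

lemma pos_def_cmat_iff:
  "pos_def_cmat A \<longleftrightarrow> (\<forall>z. z \<noteq> 0 \<longrightarrow> Im (cquad_form A z) = 0 \<and> Re (cquad_form A z) > 0)"
  unfolding pos_def_cmat_def cquad_form_def Let_def ..

lemma cquad_form_mat_1: "cquad_form (mat 1) z = of_real (\<Sum>j\<in>UNIV. (cmod (z$j))\<^sup>2)"
  by (simp add: cquad_form_def mat_def if_distrib if_distribR complex_mult_cnj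
      mult.commute cmod_power2 of_real_sum cong: if_cong)

lemma cquad_form_scaleR_add:
  "cquad_form (s *\<^sub>R A + t *\<^sub>R B) z = of_real s * cquad_form A z + of_real t * cquad_form B z"
proof -
  have "(s *\<^sub>R A + t *\<^sub>R B) $ j $ h = of_real s * A $ j $ h + of_real t * B $ j $ h" for j h
    by (simp add: scaleR_conv_of_real[where 'a=complex])
  then show ?thesis
    by (simp add: cquad_form_def algebra_simps sum.distrib sum_distrib_left)
qed

lemma pos_def_cmat_mat_1: "pos_def_cmat (mat 1 :: complex^'m^'m)"
proof -
  have "(\<Sum>j\<in>UNIV. (cmod (z$j))\<^sup>2) > 0" if "z \<noteq> 0" for z :: "complex^'m"
  proof -
    obtain j0 where "z $ j0 \<noteq> 0" using \<open>z \<noteq> 0\<close> by (metis vec_eq_iff zero_index)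
    then show ?thesis by (intro sum_pos2[where i=j0]) auto
  qed
  then show ?thesis unfolding pos_def_cmat_iff cquad_form_mat_1 by simp
qed

lemma pos_def_cmat_convex_comb:
  fixes A B :: "complex^'m^'m"
  assumes "pos_def_cmat A" "pos_def_cmat B" "0 \<le> t" "t \<le> 1"
  shows "pos_def_cmat ((1 - t) *\<^sub>R A + t *\<^sub>R B)"
  unfolding pos_def_cmat_iff cquad_form_scaleR_add
proof (intro allI impI)
  fix z :: "complex^'m" assume "z \<noteq> 0"
  then have "Im (cquad_form A z) = 0" "Re (cquad_form A z) > 0"
    "Im (cquad_form B z) = 0" "Re (cquad_form B z) > 0"
    using assms(1,2) unfolding pos_def_cmat_iff by auto
  moreover have "(1 - t) * a + t * b > 0" if "a > 0" "b > 0" for a b :: real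
    using assms(3,4) that by (cases "t = 1") (auto intro: add_pos_nonneg add_nonneg_pos)
  ultimately show "Im (of_real (1 - t) * cquad_form A z + of_real t * cquad_form B z) = 0 \<and>
      Re (of_real (1 - t) * cquad_form A z + of_real t * cquad_form B z) > 0"
    by simp
qed

lemma hermitian_cmat_scaleR_add:
  assumes "hermitian_cmat A" "hermitian_cmat B"
  shows "hermitian_cmat (s *\<^sub>R A + t *\<^sub>R B)"
  unfolding hermitian_cmat_def
proof (intro allI)
  fix i j
  have "A$i$j = cnj (A$j$i)" "B$i$j = cnj (B$j$i)"
    using assms unfolding hermitian_cmat_def by blast+
  then show "(s *\<^sub>R A + t *\<^sub>R B)$i$j = cnj ((s *\<^sub>R A + t *\<^sub>R B)$j$i)"
    by simp
qed

lemma det_cnj: "det (\<chi> i j. cnj (A$i$j)) = cnj (det (A::complex^'m^'m))"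
  unfolding det_def by simp

lemma hermitian_cmat_det_real:
  assumes "hermitian_cmat A" shows "Im (det A) = 0"
proof -
  have "cnj (A$i$j) = A$j$i" for i j
    using assms unfolding hermitian_cmat_def by (metis complex_cnj_cnj)
  then have "(\<chi> i j. cnj (A$i$j)) = transpose A"
    unfolding transpose_def by simp
  then have "cnj (det A) = det A" using det_cnj[of A] by simp
  then show ?thesis by (metis Reals_cnj_iff complex_is_Real_iff)
qed

lemma pos_def_cmat_det_nonzero:
  fixes A :: "complex^'m^'m"
  assumes "pos_def_cmat A" shows "det A \<noteq> 0"
proof
  assume "det A = 0"
  then have "\<not> (\<exists>B. B ** A = mat 1)"
    using invertible_det_nz invertible_left_inverse by blast
  then obtain z where z: "A *v z = 0" "z \<noteq> 0"
    using matrix_left_invertible_ker by blast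
  have "cquad_form A z = (\<Sum>j\<in>UNIV. cnj (z $ j) * (A *v z) $ j)"
    by (simp add: cquad_form_def matrix_vector_mult_def sum_distrib_left mult.assoc)
  then have "cquad_form A z = 0" using z by simp
  then show False using assms z(2) unfolding pos_def_cmat_iff by force
qed

lemma continuous_on_det:
  fixes F :: "'a::topological_space \<Rightarrow> complex^'m^'m"
  assumes "\<And>i j. continuous_on S (\<lambda>x. F x $ i $ j)"
  shows "continuous_on S (\<lambda>x. det (F x))"
  unfolding det_def by (intro continuous_intros assms)

lemma tendsto_det:
  fixes F :: "'a \<Rightarrow> complex^'m^'m"
  assumes "\<And>i j. ((\<lambda>x. F x $ i $ j) \<longlongrightarrow> L $ i $ j) G"
  shows "((\<lambda>x. det (F x)) \<longlongrightarrow> det L) G"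
  unfolding det_def by (intro tendsto_intros assms)

text \<open>Along the segment from the identity to A the determinant is real and never vanishes,
  so by the intermediate value theorem it keeps the sign it has at the identity.\<close>
lemma pos_def_hermitian_det_pos:
  fixes A :: "complex^'m^'m"
  assumes "pos_def_cmat A" "hermitian_cmat A"
  shows "Im (det A) = 0 \<and> Re (det A) > 0"
proof -
  define B where "B t = (1 - t) *\<^sub>R mat 1 + t *\<^sub>R A" for t :: real
  have herm_I: "hermitian_cmat (mat 1 :: complex^'m^'m)"
    by (simp add: hermitian_cmat_def mat_def)
  have nz: "Re (det (B t)) \<noteq> 0" if "0 \<le> t" "t \<le> 1" for t
  proof -
    have "det (B t) \<noteq> 0" "Im (det (B t)) = 0" unfolding B_def
      using pos_def_cmat_det_nonzero pos_def_cmat_convex_comb[OF pos_def_cmat_mat_1 assms(1) that]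
        hermitian_cmat_det_real hermitian_cmat_scaleR_add[OF herm_I assms(2)] by auto
    then show ?thesis by (simp add: complex_eq_iff)
  qed
  have cont: "continuous_on {0..1} (\<lambda>t. Re (det (B t)))"
    unfolding B_def by (intro continuous_intros continuous_on_det)
  have "Re (det A) > 0"
  proof (rule ccontr)
    assume "\<not> Re (det A) > 0"
    then obtain t where "0 \<le> t" "t \<le> 1" "Re (det (B t)) = 0"
      using IVT2'[of "\<lambda>t. Re (det (B t))" 1 0 0, OF _ _ _ cont] by (auto simp: B_def)
    then show False using nz by blast
  qed
  then show ?thesis using hermitian_cmat_det_real[OF assms(2)] by simp
qed

section \<open>Trigonometric polynomials\<close>

lemma trig_p_cos: "trig_p n p \<theta> = p 0 + (\<Sum>k\<in>{1..n}. p k * cos (real k * \<theta>))"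
  unfolding trig_p_def by (simp add: Re_exp Im_exp Re_sum sum_distrib_left)

lemma trig_Q_nth: "trig_Q n Q \<theta> $ i $ j = complex_of_real (Q 0 $ i $ j) + (1/2) * (\<Sum>k\<in>{1..n}.
       complex_of_real (Q k $ i $ j) * exp (- \<i> * of_nat k * of_real \<theta>)
     + complex_of_real (Q k $ j $ i) * exp (\<i> * of_nat k * of_real \<theta>))"
  unfolding trig_Q_def by (simp add: transpose_def)

lemma hermitian_cmat_trig_Q:
  assumes "transpose (Q 0) = Q 0"
  shows "hermitian_cmat (trig_Q n Q \<theta>)"
proof -
  have Q0: "Q 0 $ i $ j = Q 0 $ j $ i" for i j
    using arg_cong[OF assms, of "\<lambda>A. A $ j $ i"] by (simp add: transpose_def)
  have "cnj (exp (- \<i> * of_nat k * of_real \<theta>)) = exp (\<i> * of_nat k * of_real \<theta>)"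
    "cnj (exp (\<i> * of_nat k * of_real \<theta>)) = exp (- \<i> * of_nat k * of_real \<theta>)" for k
    by (simp_all add: exp_cnj)
  then show ?thesis unfolding hermitian_cmat_def trig_Q_nth
    by (simp add: Q0 cnj_sum add.commute)
qed

lemma continuous_on_trig_p: "continuous_on S (trig_p n p)"
  unfolding trig_p_cos by (intro continuous_intros)

lemma continuous_on_det_trig_Q: "continuous_on S (\<lambda>\<theta>. det (trig_Q n Q \<theta>))"
  by (intro continuous_on_det) (simp add: trig_Q_nth continuous_intros)

lemma tendsto_apply:
  fixes X :: "'a \<Rightarrow> ('i \<Rightarrow> 'b::topological_space)"
  assumes "(X \<longlongrightarrow> x) F"
  shows "((\<lambda>k. X k i) \<longlongrightarrow> x i) F"
  using continuous_on_tendsto_compose[OF continuous_on_product_coordinates[of i] assms] by simp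

lemma tendsto_trig_p:
  assumes "(P \<longlongrightarrow> p) F"
  shows "((\<lambda>k. trig_p n (P k) \<theta>) \<longlongrightarrow> trig_p n p \<theta>) F"
  unfolding trig_p_cos by (intro tendsto_intros tendsto_apply[OF assms])

lemma tendsto_det_trig_Q:
  fixes QQ :: "'a \<Rightarrow> (nat \<Rightarrow> real^'m^'m)"
  assumes "(QQ \<longlongrightarrow> Q) F"
  shows "((\<lambda>k. det (trig_Q n (QQ k) \<theta>)) \<longlongrightarrow> det (trig_Q n Q \<theta>)) F"
proof (rule tendsto_det)
  have coeff: "((\<lambda>k. QQ k l $ i $ j) \<longlongrightarrow> Q l $ i $ j) F" for l i j
    by (intro tendsto_vec_nth tendsto_apply[OF assms])
  show "((\<lambda>k. trig_Q n (QQ k) \<theta> $ i $ j) \<longlongrightarrow> trig_Q n Q \<theta> $ i $ j) F" for i j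
    unfolding trig_Q_nth by (intro tendsto_intros coeff)
qed

lemma abs_trig_p_le: "\<bar>trig_p n p \<theta>\<bar> \<le> (\<Sum>k\<in>{0..n}. \<bar>p k\<bar>)"
proof -
  have "\<bar>trig_p n p \<theta>\<bar> \<le> \<bar>p 0\<bar> + (\<Sum>k\<in>{1..n}. \<bar>p k * cos (real k * \<theta>)\<bar>)"
    unfolding trig_p_cos by (rule order_trans[OF abs_triangle_ineq add_left_mono[OF sum_abs]])
  also have "\<dots> \<le> \<bar>p 0\<bar> + (\<Sum>k\<in>{1..n}. \<bar>p k\<bar>)"
    by (intro add_left_mono sum_mono) (simp add: abs_mult mult_left_le)
  also have "\<dots> = (\<Sum>k\<in>{0..n}. \<bar>p k\<bar>)"
    by (simp add: sum.atLeast_Suc_atMost[of 0 n] atLeastSucAtMost_greaterThanAtMost)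
  finally show ?thesis .
qed

lemma abs_nth_nth_le_norm: "\<bar>A $ i $ j\<bar> \<le> norm (A :: real^'n^'m)"
  using component_le_norm_cart[where x="A $ i" and i=j] Finite_Cartesian_Product.norm_nth_le[of A i]
  by linarith

lemma norm_trig_Q_nth_le: "cmod (trig_Q n Q \<theta> $ i $ j) \<le> (\<Sum>k\<in>{0..n}. norm (Q k))"
proof -
  have summand: "cmod (complex_of_real (Q k $ i $ j) * exp (- \<i> * of_nat k * of_real \<theta>)
     + complex_of_real (Q k $ j $ i) * exp (\<i> * of_nat k * of_real \<theta>)) \<le> 2 * norm (Q k)" for k
    using norm_triangle_ineq[of "complex_of_real (Q k $ i $ j) * exp (- \<i> * of_nat k * of_real \<theta>)"
        "complex_of_real (Q k $ j $ i) * exp (\<i> * of_nat k * of_real \<theta>)"]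
      abs_nth_nth_le_norm[of "Q k" i j] abs_nth_nth_le_norm[of "Q k" j i]
    by (simp add: norm_mult norm_exp_eq_Re)
  have "cmod (\<Sum>k\<in>{1..n}. complex_of_real (Q k $ i $ j) * exp (- \<i> * of_nat k * of_real \<theta>)
     + complex_of_real (Q k $ j $ i) * exp (\<i> * of_nat k * of_real \<theta>)) \<le> (\<Sum>k\<in>{1..n}. 2 * norm (Q k))"
    by (rule order_trans[OF norm_sum sum_mono]) (rule summand)
  then have "cmod (trig_Q n Q \<theta> $ i $ j) \<le> norm (Q 0) + (1/2) * (\<Sum>k\<in>{1..n}. 2 * norm (Q k))"
    unfolding trig_Q_nth using abs_nth_nth_le_norm[of "Q 0" i j]
    by (intro order_trans[OF norm_triangle_ineq]) (simp add: norm_mult)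
  also have "\<dots> = (\<Sum>k\<in>{0..n}. norm (Q k))"
    by (simp add: sum_distrib_left sum.atLeast_Suc_atMost[of 0 n] atLeastSucAtMost_greaterThanAtMost)
  finally show ?thesis .
qed

lemma norm_det_le:
  fixes A :: "'a::real_normed_field^'m^'m"
  assumes "\<And>i j. norm (A$i$j) \<le> B"
  shows "norm (det A) \<le> fact CARD('m) * B ^ CARD('m)"
proof -
  have "norm (det A) \<le> (\<Sum>p\<in>{p. p permutes (UNIV::'m set)}. norm (of_int (sign p) * (\<Prod>i\<in>UNIV. A$i$p i)))"
    unfolding det_def by (rule norm_sum)
  also have "\<dots> \<le> (\<Sum>p\<in>{p. p permutes (UNIV::'m set)}. B ^ CARD('m))"
  proof (rule sum_mono)
    fix p :: "'m \<Rightarrow> 'm"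
    have "(\<Prod>i\<in>UNIV. norm (A$i$p i)) \<le> (\<Prod>i\<in>(UNIV::'m set). B)"
      by (intro prod_mono) (simp add: assms)
    then show "norm (of_int (sign p) * (\<Prod>i\<in>UNIV. A$i$p i)) \<le> B ^ CARD('m)"
      by (simp add: norm_mult prod_norm sign_def)
  qed
  finally show ?thesis by (simp add: card_permutations)
qed

lemma Bo_bar_trig_p_nonneg:
  assumes "p \<in> Bo_bar n" "\<theta> \<in> period_interval"
  shows "trig_p n p \<theta> \<ge> 0"
proof -
  obtain P where P: "\<And>k. P k \<in> Bo n" "P \<longlonglongrightarrow> p"
    using assms(1) unfolding Bo_bar_def closure_sequential by metis
  have "trig_p n (P k) \<theta> > 0" for k using P(1) assms(2) unfolding Bo_def by auto
  then show ?thesis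
    using tendsto_trig_p[OF P(2)] by (meson LIMSEQ_le_const less_imp_le)
qed

lemma Bm_det_trig_Q_pos:
  assumes "Q \<in> Bm n E" "\<theta> \<in> period_interval"
  shows "Im (det (trig_Q n Q \<theta>)) = 0 \<and> Re (det (trig_Q n Q \<theta>)) > 0"
  using assms pos_def_hermitian_det_pos hermitian_cmat_trig_Q unfolding Bm_def by blast

lemma Bm_bar_det_trig_Q_nonneg:
  assumes "Q \<in> Bm_bar n E" "\<theta> \<in> period_interval"
  shows "Im (det (trig_Q n Q \<theta>)) = 0 \<and> Re (det (trig_Q n Q \<theta>)) \<ge> 0"
proof -
  have "Q \<in> closure (Bm n E)" using assms(1) unfolding Bm_bar_def by blast
  then obtain QQ where QQ: "\<And>k. QQ k \<in> Bm n E" "QQ \<longlonglongrightarrow> Q"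
    unfolding closure_sequential by blast
  have lim: "(\<lambda>k. det (trig_Q n (QQ k) \<theta>)) \<longlonglongrightarrow> det (trig_Q n Q \<theta>)"
    by (rule tendsto_det_trig_Q[OF QQ(2)])
  have pos: "Im (det (trig_Q n (QQ k) \<theta>)) = 0 \<and> Re (det (trig_Q n (QQ k) \<theta>)) > 0" for k
    using Bm_det_trig_Q_pos[OF QQ(1) assms(2)] by blast
  have "Im (det (trig_Q n Q \<theta>)) = 0"
    using tendsto_Im[OF lim] pos by (simp add: LIMSEQ_const_iff)
  moreover have "Re (det (trig_Q n Q \<theta>)) \<ge> 0"
    using tendsto_Re[OF lim] pos by (meson LIMSEQ_le_const less_imp_le)
  ultimately show ?thesis by blast
qed

lemma LIMSEQ_bounded_above:
  fixes f :: "nat \<Rightarrow> real"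
  assumes "f \<longlonglongrightarrow> l"
  shows "\<exists>B. (\<forall>k. f k \<le> B) \<and> l \<le> B"
proof -
  have "Bseq f" using assms by (intro convergent_imp_Bseq convergentI)
  then obtain B where B: "\<And>k. f k \<le> B" by (metis BseqE real_norm_def abs_le_D1)
  then have "l \<le> B" using assms by (intro LIMSEQ_le_const2) auto
  with B show ?thesis by blast
qed

lemma trig_bounds_of_convergent:
  fixes QQ :: "nat \<Rightarrow> nat \<Rightarrow> real^'m^'m"
  assumes "P \<longlonglongrightarrow> p" "QQ \<longlonglongrightarrow> Q"
  obtains K D where "K \<ge> 0" "D \<ge> 1"
    "\<And>k \<theta>. trig_p n (P k) \<theta> \<le> K" "\<And>\<theta>. trig_p n p \<theta> \<le> K"
    "\<And>k \<theta>. Re (det (trig_Q n (QQ k) \<theta>)) \<le> D" "\<And>\<theta>. Re (det (trig_Q n Q \<theta>)) \<le> D"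
proof -
  have "(\<lambda>k. \<Sum>i\<in>{0..n}. \<bar>P k i\<bar>) \<longlonglongrightarrow> (\<Sum>i\<in>{0..n}. \<bar>p i\<bar>)"
    by (intro tendsto_intros tendsto_apply[OF assms(1)])
  then obtain K where K: "\<And>k. (\<Sum>i\<in>{0..n}. \<bar>P k i\<bar>) \<le> K" "(\<Sum>i\<in>{0..n}. \<bar>p i\<bar>) \<le> K"
    using LIMSEQ_bounded_above by blast
  have "(\<lambda>k. \<Sum>i\<in>{0..n}. norm (QQ k i)) \<longlonglongrightarrow> (\<Sum>i\<in>{0..n}. norm (Q i))"
    by (intro tendsto_intros tendsto_apply[OF assms(2)])
  then obtain B where B: "\<And>k. (\<Sum>i\<in>{0..n}. norm (QQ k i)) \<le> B" "(\<Sum>i\<in>{0..n}. norm (Q i)) \<le> B"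
    using LIMSEQ_bounded_above by blast
  have "B \<ge> 0" using B(2) sum_nonneg[of "{0..n}" "\<lambda>i. norm (Q i)"] by simp
  define D where "D = max 1 (fact CARD('m) * B ^ CARD('m))"
  have Re_det_le: "Re (det (trig_Q n Q' \<theta>)) \<le> D"
    if "(\<Sum>i\<in>{0..n}. norm (Q' i)) \<le> B" for Q' :: "nat \<Rightarrow> real^'m^'m" and \<theta>
  proof -
    have "Re (det (trig_Q n Q' \<theta>)) \<le> fact CARD('m) * B ^ CARD('m)"
      using complex_Re_le_cmod norm_det_le norm_trig_Q_nth_le that by (blast intro: order_trans)
    then show ?thesis unfolding D_def by linarith
  qed
  show ?thesis
  proof (rule that[of "max 0 K" D])
    show "trig_p n (P k) \<theta> \<le> max 0 K" "trig_p n p \<theta> \<le> max 0 K" for k \<theta>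
      using abs_trig_p_le K abs_le_D1 order_trans max.coboundedI2 by metis+
    show "Re (det (trig_Q n (QQ k) \<theta>)) \<le> D" "Re (det (trig_Q n Q \<theta>)) \<le> D" for k \<theta>
      using Re_det_le B by blast+
  qed (simp_all add: D_def)
qed

section \<open>The pointwise integrands\<close>

lemma det_mat: "det (mat c :: 'a::comm_ring_1^'m^'m) = c ^ CARD('m)"
  by (subst det_diagonal) (auto simp: mat_def)

lemma det_mat_mult_matrix_inv:
  fixes A :: "complex^'m^'m"
  assumes "det A \<noteq> 0"
  shows "det (mat c ** matrix_inv A) = c ^ CARD('m) / det A"
proof -
  have "invertible A" using assms invertible_det_nz by blast
  then have "A ** matrix_inv A = mat 1"
    unfolding matrix_inv_def invertible_def by (rule someI2_ex) auto
  then have "det A * det (matrix_inv A) = 1" by (metis det_I det_mul)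
  then show ?thesis using assms by (simp add: det_mul det_mat field_simps)
qed

text \<open>The integrand of J as a function of a = p(e^{i theta}) and d = det Q(e^{i theta}),
  using det(a Q^{-1}) = a^N / det Q.\<close>
definition J_scalar :: "nat \<Rightarrow> real \<Rightarrow> complex \<Rightarrow> ereal" where
  "J_scalar N a d = (if a > 0 \<and> d \<noteq> 0 then ereal (a * ln (Re (complex_of_real (a^N) / d)) - real N * a)
     else if a = 0 then 0 else \<infinity>)"

lemma J_integrand_eq_J_scalar:
  fixes Q :: "nat \<Rightarrow> real^'m^'m"
  shows "J_integrand n p Q \<theta> = J_scalar CARD('m) (trig_p n p \<theta>) (det (trig_Q n Q \<theta>))"
  by (cases "trig_p n p \<theta> > 0 \<and> det (trig_Q n Q \<theta>) \<noteq> 0")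
    (auto simp: J_integrand_def J_scalar_def Let_def det_mat_mult_matrix_inv)

lemma J_scalar_pos:
  assumes "a > 0" "Im d = 0" "Re d > 0"
  shows "J_scalar N a d = ereal (a * (real N * ln a - ln (Re d)) - real N * a)"
proof -
  have "d = complex_of_real (Re d)" "d \<noteq> 0" using assms(2,3) by (auto simp: complex_eq_iff)
  then have "Re (complex_of_real (a^N) / d) = a^N / Re d"
    by (metis Re_complex_of_real of_real_divide)
  then show ?thesis using assms \<open>d \<noteq> 0\<close> by (simp add: J_scalar_def ln_div ln_realpow)
qed

lemma Re_pos_if_nonzero:
  assumes "Im d = 0" "Re d \<ge> 0" "d \<noteq> 0" shows "Re d > 0"
  using assms by (simp add: complex_eq_iff less_eq_real_def)

lemma mult_ln_ge_neg_sqrt: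
  fixes a :: real assumes "a > 0" shows "a * ln a \<ge> - 2 * sqrt a"
proof -
  define s where "s = sqrt a"
  have s: "s > 0" "a = s\<^sup>2" using assms by (auto simp: s_def)
  have "ln s \<ge> 1 - 1/s"
    using ln_le_minus_one[of "1/s"] s(1) by (simp add: ln_div)
  then have "s * ln s \<ge> s - 1" using s(1) by (simp add: field_simps)
  then have "2 * s * (s * ln s) \<ge> 2 * s * (s - 1)" using s(1) by (intro mult_left_mono) auto
  moreover have "a * ln a = 2 * s * (s * ln s)" using s by (simp add: ln_mult power2_eq_square)
  moreover have "2 * s * (s - 1) \<ge> - 2 * s" using s(1) by (simp add: algebra_simps)
  ultimately show ?thesis unfolding s_def by linarith
qed

text \<open>A lower bound that is uniform for bounded det Q and tends to 0 = J_scalar N 0 d as a tends to 0.\<close>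
lemma J_scalar_ge:
  assumes "a \<ge> 0" "Im d = 0" "Re d \<ge> 0" "Re d \<le> D" "D \<ge> 1"
  shows "ereal (- 2 * real N * sqrt a - a * ln D - real N * a) \<le> J_scalar N a d"
proof (cases "a = 0 \<or> d = 0")
  case True then show ?thesis using assms(1) by (auto simp: J_scalar_def)
next
  case False
  then have a: "a > 0" and d: "Re d > 0" using assms Re_pos_if_nonzero by auto
  have "a * ln (Re d) \<le> a * ln D" using a d assms(4) by (intro mult_left_mono) auto
  moreover have "real N * (a * ln a) \<ge> real N * (- 2 * sqrt a)"
    using mult_ln_ge_neg_sqrt[OF a] by (intro mult_left_mono) auto
  ultimately show ?thesis unfolding J_scalar_pos[OF a assms(2) d] by (simp add: algebra_simps)
qed

lemma J_scalar_ge_const: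
  assumes "0 \<le> a" "a \<le> K" "Im d = 0" "0 \<le> Re d" "Re d \<le> D" "D \<ge> 1"
  shows "- ereal (2 * real N * sqrt K + K * ln D + real N * K) \<le> J_scalar N a d"
proof -
  have "2 * real N * sqrt a \<le> 2 * real N * sqrt K" "a * ln D \<le> K * ln D" "real N * a \<le> real N * K"
    using assms by (auto intro: mult_left_mono mult_right_mono)
  then have "- ereal (2 * real N * sqrt K + K * ln D + real N * K)
      \<le> ereal (- 2 * real N * sqrt a - a * ln D - real N * a)"
    by simp
  also have "\<dots> \<le> J_scalar N a d" using J_scalar_ge assms by blast
  finally show ?thesis .
qed

lemma J_scalar_gt_if_det_small:
  assumes "0 < b" "b < a" "M \<ge> 0" "Im d = 0" "Re d \<ge> 0"
    and small: "Re d < exp (real N * ln b - real N - M / b)"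
  shows "ereal M < J_scalar N a d"
proof (cases "d = 0")
  case True then show ?thesis using assms(1,2) by (simp add: J_scalar_def)
next
  case False
  then have d: "Re d > 0" using assms(4,5) Re_pos_if_nonzero by blast
  have a: "a > 0" using assms(1,2) by simp
  have "ln (Re d) < real N * ln b - real N - M / b"
    using small d by (metis ln_exp ln_less_cancel_iff exp_gt_zero)
  moreover have "real N * ln b \<le> real N * ln a" using assms(1,2) by (intro mult_left_mono) auto
  ultimately have "M / b < real N * ln a - ln (Re d) - real N" by linarith
  then have "a * (M / b) < a * (real N * ln a - ln (Re d) - real N)"
    using a by (intro mult_strict_left_mono)
  moreover have "M \<le> a * (M / b)" using assms(1-3) by (auto simp: field_simps intro: mult_left_mono)
  ultimately show ?thesis unfolding J_scalar_pos[OF a assms(4) d] by (simp add: algebra_simps)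
qed

lemma J_scalar_le_liminf:
  fixes A :: "nat \<Rightarrow> real" and Dt :: "nat \<Rightarrow> complex"
  assumes A: "A \<longlonglongrightarrow> a" and Dt: "Dt \<longlonglongrightarrow> d"
    and bounds: "\<And>k. A k \<ge> 0" "\<And>k. Im (Dt k) = 0" "\<And>k. Re (Dt k) \<ge> 0" "\<And>k. Re (Dt k) \<le> D"
    and "D \<ge> 1" and lim: "a \<ge> 0" "Im d = 0" "Re d \<ge> 0"
  shows "J_scalar N a d \<le> liminf (\<lambda>k. J_scalar N (A k) (Dt k))"
  unfolding le_Liminf_iff
proof (intro allI impI)
  fix y assume y: "y < J_scalar N a d"
  have ReD: "(\<lambda>k. Re (Dt k)) \<longlonglongrightarrow> Re d" by (intro tendsto_intros Dt)
  consider "a > 0" "d \<noteq> 0" | "a > 0" "d = 0" | "a = 0" using lim by force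
  then show "\<forall>\<^sub>F k in sequentially. y < J_scalar N (A k) (Dt k)"
  proof cases
    case 1
    then have d: "Re d > 0" using lim Re_pos_if_nonzero by blast
    have "(\<lambda>k. ereal (A k * (real N * ln (A k) - ln (Re (Dt k))) - real N * A k))
       \<longlonglongrightarrow> ereal (a * (real N * ln a - ln (Re d)) - real N * a)"
      using 1 d by (intro tendsto_intros A ReD) auto
    then have "\<forall>\<^sub>F k in sequentially. y < ereal (A k * (real N * ln (A k) - ln (Re (Dt k))) - real N * A k)"
      using y unfolding J_scalar_pos[OF 1(1) lim(2) d] by (rule order_tendstoD(1))
    with order_tendstoD(1)[OF A 1(1)] order_tendstoD(1)[OF ReD d]
    show ?thesis by eventually_elim (use bounds in \<open>simp add: J_scalar_pos\<close>)
  next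
    case 2
    have "y \<noteq> \<infinity>" using y by auto
    then obtain M :: nat where M: "y < ereal (real M)" using less_PInf_Ex_of_nat by blast
    have "a/2 < a" "Re d = 0" using 2 by simp_all
    then have "\<forall>\<^sub>F k in sequentially. Re (Dt k) < exp (real N * ln (a/2) - real N - real M / (a/2))"
      using order_tendstoD(2)[OF ReD] by simp
    with order_tendstoD(1)[OF A \<open>a/2 < a\<close>] show ?thesis
    proof eventually_elim
      case (elim k)
      have "ereal (real M) < J_scalar N (A k) (Dt k)"
        using 2 elim bounds by (intro J_scalar_gt_if_det_small[of "a/2"]) auto
      then show ?case using M by (rule less_trans[rotated])
    qed
  next
    case 3
    define lb where "lb x = - 2 * real N * sqrt x - x * ln D - real N * x" for x
    have "(\<lambda>k. ereal (lb (A k))) \<longlonglongrightarrow> ereal (lb a)"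
      unfolding lb_def by (intro tendsto_intros A)
    moreover have "y < ereal (lb a)" using y 3 by (simp add: J_scalar_def lb_def zero_ereal_def)
    ultimately have "\<forall>\<^sub>F k in sequentially. y < ereal (lb (A k))" by (rule order_tendstoD(1))
    then show ?thesis
      by eventually_elim (use J_scalar_ge[OF bounds \<open>D \<ge> 1\<close>] in \<open>auto simp: lb_def intro: less_le_trans\<close>)
  qed
qed

definition inv_scalar :: "real \<Rightarrow> ereal" where
  "inv_scalar a = (if a > 0 then ereal (1/a) else \<infinity>)"

lemma inv_scalar_eq_inverse: "a \<ge> 0 \<Longrightarrow> inv_scalar a = inverse (ereal a)"
  by (auto simp: inv_scalar_def inverse_eq_divide)

lemma inv_scalar_nonneg: "0 \<le> inv_scalar a"
  by (simp add: inv_scalar_def)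

lemma tendsto_inv_scalar:
  assumes "A \<longlonglongrightarrow> a" "\<And>k. A k \<ge> 0" "a \<ge> 0"
  shows "(\<lambda>k. inv_scalar (A k)) \<longlonglongrightarrow> inv_scalar a"
proof -
  have "(\<lambda>k. inverse (ereal (A k))) \<longlonglongrightarrow> inverse (ereal a)"
    using assms by (intro Extended_Real.tendsto_inverse_ereal) auto
  then show ?thesis using assms by (simp add: inv_scalar_eq_inverse)
qed

lemma borel_measurable_J_scalar_trig [measurable]:
  "(\<lambda>\<theta>. J_scalar N (trig_p n p \<theta>) (det (trig_Q n Q \<theta>))) \<in> borel_measurable lborel"
proof -
  have [measurable]: "trig_p n p \<in> borel_measurable borel" "(\<lambda>\<theta>. det (trig_Q n Q \<theta>)) \<in> borel_measurable borel"
    by (intro borel_measurable_continuous_onI continuous_on_trig_p continuous_on_det_trig_Q)+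
  show ?thesis unfolding J_scalar_def by measurable
qed

lemma borel_measurable_inv_scalar_trig [measurable]:
  "(\<lambda>\<theta>. inv_scalar (trig_p n p \<theta>)) \<in> borel_measurable lborel"
proof -
  have [measurable]: "trig_p n p \<in> borel_measurable borel"
    by (intro borel_measurable_continuous_onI continuous_on_trig_p)
  show ?thesis unfolding inv_scalar_def by measurable
qed

definition lin_term :: "nat \<Rightarrow> (nat \<Rightarrow> real^'m^'m) \<Rightarrow> (nat \<Rightarrow> real)
    \<Rightarrow> (nat \<Rightarrow> real) \<Rightarrow> (nat \<Rightarrow> real^'m^'m) \<Rightarrow> real" where
  "lin_term n R c p Q = (\<Sum>k\<in>{0..n}. trace (transpose (Q k) ** R k)) - (\<Sum>k\<in>{0..n}. p k * c k)"

lemma ereal_add_diff_real: "(x::ereal) + ereal y - ereal z = x + ereal (y - z)"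
  by (cases x) auto

lemma J_tilde_eq:
  fixes Q :: "nat \<Rightarrow> real^'m^'m"
  shows "J_tilde n R c lam (p, Q) =
      (intT (\<lambda>\<theta>. J_scalar CARD('m) (trig_p n p \<theta>) (det (trig_Q n Q \<theta>))) + ereal (lin_term n R c p Q))
      + ereal lam * intT (\<lambda>\<theta>. inv_scalar (trig_p n p \<theta>))"
proof -
  have "(\<lambda>\<theta>. if trig_p n p \<theta> > 0 then ereal (1 / trig_p n p \<theta>) else PInfty)
      = (\<lambda>\<theta>. inv_scalar (trig_p n p \<theta>))"
    by (simp add: fun_eq_iff inv_scalar_def)
  then show ?thesis
    by (simp add: J_tilde_def J_fun_def g_fun_def lin_term_def ereal_add_diff_real
        J_integrand_eq_J_scalar[abs_def])
qed

lemma tendsto_lin_term: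
  assumes "P \<longlonglongrightarrow> p" "QQ \<longlonglongrightarrow> Q"
  shows "(\<lambda>k. lin_term n R c (P k) (QQ k)) \<longlonglongrightarrow> lin_term n R c p Q"
proof -
  have coeff: "(\<lambda>k. QQ k l $ i $ j) \<longlonglongrightarrow> Q l $ i $ j" for l i j
    by (intro tendsto_vec_nth tendsto_apply[OF assms(2)])
  show ?thesis
    unfolding lin_term_def trace_def matrix_matrix_mult_def transpose_def
    by (simp only: vec_lambda_beta) (intro tendsto_intros tendsto_apply[OF assms(1)] coeff)
qed

section \<open>Integrals over the period of functions bounded below\<close>

lemma e2ennreal_pos_part_add:
  fixes x :: ereal
  assumes "C \<ge> 0" "- ereal C \<le> x"
  shows "e2ennreal (max 0 x) + ennreal C = e2ennreal (x + ereal C) + e2ennreal (max 0 (- x))"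
proof (cases x)
  case (real r)
  show ?thesis
  proof (cases "r \<ge> 0")
    case True then show ?thesis using real assms by (simp add: ennreal_plus max_def e2ennreal_neg)
  next
    case False
    then have "e2ennreal (max 0 x) = 0" "max 0 (- x) = ereal (- r)"
      using real by (simp_all add: max_def zero_ereal_def)
    then show ?thesis using real assms False by (simp add: ennreal_plus[symmetric])
  qed
qed (use assms in simp_all)

text \<open>For f bounded below by -C the difference of positive and negative parts in intT can be
  replaced by a single nonnegative integral, to which Fatou's lemma applies.\<close>
lemma intT_shift:
  assumes f: "f \<in> borel_measurable lborel" and C: "C \<ge> 0"
    and lb: "\<And>\<theta>. \<theta> \<in> period_interval \<Longrightarrow> - ereal C \<le> f \<theta>"
  shows "intT f = ereal (1/(2*pi)) *
    (enn2ereal (\<integral>\<^sup>+ \<theta>\<in>period_interval. e2ennreal (f \<theta> + ereal C) \<partial>lborel) - ereal (2*pi*C))"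
proof -
  define P where "P = (\<integral>\<^sup>+ \<theta>\<in>period_interval. e2ennreal (max 0 (f \<theta>)) \<partial>lborel)"
  define N where "N = (\<integral>\<^sup>+ \<theta>\<in>period_interval. e2ennreal (max 0 (- f \<theta>)) \<partial>lborel)"
  define V where "V = (\<integral>\<^sup>+ \<theta>\<in>period_interval. e2ennreal (f \<theta> + ereal C) \<partial>lborel)"
  have const: "(\<integral>\<^sup>+ \<theta>. ennreal C * indicator period_interval \<theta> \<partial>lborel) = ennreal (2*pi*C)"
    using C by (simp add: nn_integral_cmult_indicator ennreal_mult[symmetric] mult.commute)
  have "P + ennreal (2*pi*C) =
      (\<integral>\<^sup>+ \<theta>. (e2ennreal (max 0 (f \<theta>)) + ennreal C) * indicator period_interval \<theta> \<partial>lborel)"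
    unfolding P_def const[symmetric] using f by (subst nn_integral_add[symmetric]) (auto simp: distrib_right)
  also have "\<dots> = (\<integral>\<^sup>+ \<theta>. (e2ennreal (f \<theta> + ereal C) + e2ennreal (max 0 (- f \<theta>)))
      * indicator period_interval \<theta> \<partial>lborel)"
    by (intro nn_integral_cong) (auto simp: e2ennreal_pos_part_add[OF C lb] split: split_indicator)
  also have "\<dots> = V + N" unfolding V_def N_def using f by (subst nn_integral_add[symmetric]) (auto simp: distrib_right)
  finally have eq: "enn2ereal P + ereal (2*pi*C) = enn2ereal V + enn2ereal N"
    using C by (metis enn2ereal_ennreal plus_ennreal.rep_eq mult_nonneg_nonneg pi_ge_zero zero_le_numeral)
  have "N \<le> (\<integral>\<^sup>+ \<theta>. ennreal C * indicator period_interval \<theta> \<partial>lborel)" unfolding N_def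
  proof (intro nn_integral_mono)
    fix \<theta> show "e2ennreal (max 0 (- f \<theta>)) * indicator period_interval \<theta> \<le> ennreal C * indicator period_interval \<theta>"
    proof (cases "\<theta> \<in> period_interval")
      case True
      then have "max 0 (- f \<theta>) \<le> ereal C" using lb C by (auto simp: ereal_uminus_le_reorder)
      then show ?thesis using True e2ennreal_mono by fastforce
    qed simp
  qed
  then have "enn2ereal N \<le> ereal (2*pi*C)" unfolding const using C
    by (metis enn2ereal_ennreal less_eq_ennreal.rep_eq mult_nonneg_nonneg pi_ge_zero zero_le_numeral)
  then obtain r where r: "enn2ereal N = ereal r" using enn2ereal_nonneg[of N] by (cases "enn2ereal N") auto
  have "enn2ereal P - enn2ereal N = enn2ereal V - ereal (2*pi*C)"
    using eq enn2ereal_nonneg[of P] enn2ereal_nonneg[of V] unfolding r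
    by (cases "enn2ereal P"; cases "enn2ereal V") auto
  then show ?thesis unfolding intT_def P_def[symmetric] N_def[symmetric] V_def[symmetric] by simp
qed

lemma intT_ge:
  assumes "f \<in> borel_measurable lborel" "C \<ge> 0"
    and "\<And>\<theta>. \<theta> \<in> period_interval \<Longrightarrow> - ereal C \<le> f \<theta>"
  shows "- ereal C \<le> intT f"
proof -
  have "ereal (1/(2*pi)) * (0 - ereal (2*pi*C)) \<le> ereal (1/(2*pi)) *
     (enn2ereal (\<integral>\<^sup>+ \<theta>\<in>period_interval. e2ennreal (f \<theta> + ereal C) \<partial>lborel) - ereal (2*pi*C))"
    by (intro ereal_mult_left_mono ereal_minus_mono) auto
  then show ?thesis using intT_shift[OF assms] by simp
qed

lemma intT_le_liminf:
  fixes u :: "nat \<Rightarrow> real \<Rightarrow> ereal"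
  assumes meas: "\<And>k. u k \<in> borel_measurable lborel" "v \<in> borel_measurable lborel"
    and C: "C \<ge> 0"
    and lb: "\<And>k \<theta>. \<theta> \<in> period_interval \<Longrightarrow> - ereal C \<le> u k \<theta>"
      "\<And>\<theta>. \<theta> \<in> period_interval \<Longrightarrow> - ereal C \<le> v \<theta>"
    and le: "\<And>\<theta>. \<theta> \<in> period_interval \<Longrightarrow> v \<theta> \<le> liminf (\<lambda>k. u k \<theta>)"
  shows "intT v \<le> liminf (\<lambda>k. intT (u k))"
proof -
  define W where "W w = (\<integral>\<^sup>+ \<theta>\<in>period_interval. e2ennreal (w \<theta> + ereal C) \<partial>lborel)"
    for w :: "real \<Rightarrow> ereal"
  have mono_e2ennreal: "mono e2ennreal" by (simp add: mono_def e2ennreal_mono)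
  have mono_enn2ereal: "mono enn2ereal" by (simp add: mono_def less_eq_ennreal.rep_eq)
  have "W v \<le> (\<integral>\<^sup>+ \<theta>. liminf (\<lambda>k. e2ennreal (u k \<theta> + ereal C) * indicator period_interval \<theta>) \<partial>lborel)"
    unfolding W_def
  proof (intro nn_integral_mono)
    fix \<theta>
    show "e2ennreal (v \<theta> + ereal C) * indicator period_interval \<theta>
      \<le> liminf (\<lambda>k. e2ennreal (u k \<theta> + ereal C) * indicator period_interval \<theta>)"
    proof (cases "\<theta> \<in> period_interval")
      case True
      have "liminf (\<lambda>k. e2ennreal (u k \<theta> + ereal C)) = e2ennreal (liminf (\<lambda>k. u k \<theta>) + ereal C)"
        by (simp add: Liminf_compose_continuous_mono[OF continuous_on_e2ennreal mono_e2ennreal]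
            Liminf_add_ereal_right)
      then show ?thesis using le[OF True] True by (simp add: e2ennreal_mono add_right_mono)
    qed simp
  qed
  also have "\<dots> \<le> liminf (\<lambda>k. W (u k))" unfolding W_def
    by (rule nn_integral_liminf) (use meas in measurable)
  finally have "enn2ereal (W v) \<le> enn2ereal (liminf (\<lambda>k. W (u k)))"
    by (simp add: less_eq_ennreal.rep_eq)
  also have "\<dots> = liminf (\<lambda>k. enn2ereal (W (u k)))"
    by (simp add: Liminf_compose_continuous_mono[OF continuous_on_enn2ereal mono_enn2ereal])
  finally have W: "enn2ereal (W v) \<le> liminf (\<lambda>k. enn2ereal (W (u k)))" .
  have "intT v = ereal (1/(2*pi)) * (enn2ereal (W v) - ereal (2*pi*C))"
    unfolding W_def by (rule intT_shift[OF meas(2) C lb(2)])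
  also have "\<dots> \<le> ereal (1/(2*pi)) * (liminf (\<lambda>k. enn2ereal (W (u k))) - ereal (2*pi*C))"
    using W by (intro ereal_mult_left_mono ereal_minus_mono) auto
  also have "\<dots> = liminf (\<lambda>k. ereal (1/(2*pi)) * (enn2ereal (W (u k)) - ereal (2*pi*C)))"
    using Liminf_add_ereal_right[of sequentially "ereal (- (2*pi*C))" "\<lambda>k. enn2ereal (W (u k))"]
    by (simp add: Liminf_ereal_mult_left minus_ereal_def)
  also have "\<dots> = liminf (\<lambda>k. intT (u k))"
    unfolding W_def using intT_shift[OF meas(1) C lb(1)] by simp
  finally show ?thesis .
qed

lemma ereal_le_liminf_add:
  fixes f g :: "nat \<Rightarrow> ereal"
  assumes "a \<le> liminf f" "b \<le> liminf g" "liminf f \<noteq> - \<infinity>" "liminf g \<noteq> - \<infinity>"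
  shows "a + b \<le> liminf (\<lambda>k. f k + g k)"
  using assms ereal_liminf_add_mono[of f g] add_mono order_trans by blast

section \<open>Lower semicontinuity\<close>

lemma lsc_onI_sequentially:
  fixes F :: "'a::first_countable_topology \<Rightarrow> ereal"
  assumes "\<And>X x. (\<And>k. X k \<in> S) \<Longrightarrow> x \<in> S \<Longrightarrow> X \<longlonglongrightarrow> x \<Longrightarrow> F x \<le> liminf (\<lambda>k. F (X k))"
  shows "lsc_on S F"
  unfolding lsc_on_def
proof
  fix a
  define T where "T = {x\<in>S. F x \<le> a}"
  have "S \<inter> closure T \<subseteq> T"
  proof
    fix x assume x: "x \<in> S \<inter> closure T"
    then have "x \<in> closure T" by blast
    then obtain X where X: "\<And>k. X k \<in> T" "X \<longlonglongrightarrow> x" unfolding closure_sequential by blast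
    have "F x \<le> liminf (\<lambda>k. F (X k))" using X x by (intro assms) (auto simp: T_def)
    also have "\<dots> \<le> a" using X(1) by (intro Liminf_le) (auto simp: T_def)
    finally show "x \<in> T" using x by (simp add: T_def)
  qed
  then have "T = S \<inter> closure T" using closure_subset[of T] by (auto simp: T_def)
  then have "closedin (top_of_set S) T" by (metis closedin_closed closed_closure)
  then have "openin (top_of_set S) (S - T)" by (metis openin_diff openin_topspace topspace_euclidean_subtopology)
  moreover have "S - T = {x\<in>S. a < F x}" by (auto simp: T_def)
  ultimately show "openin (top_of_set S) {x\<in>S. a < F x}" by simp
qed

lemma intT_J_scalar_le_liminf:
  fixes QQ :: "nat \<Rightarrow> nat \<Rightarrow> real^'m^'m"
  assumes conv: "P \<longlonglongrightarrow> p" "QQ \<longlonglongrightarrow> Q"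
    and mem: "\<And>k. P k \<in> Bo_bar n" "\<And>k. QQ k \<in> Bm_bar n E" "p \<in> Bo_bar n" "Q \<in> Bm_bar n E"
  obtains C where
    "\<And>k. - ereal C \<le> intT (\<lambda>\<theta>. J_scalar CARD('m) (trig_p n (P k) \<theta>) (det (trig_Q n (QQ k) \<theta>)))"
    "intT (\<lambda>\<theta>. J_scalar CARD('m) (trig_p n p \<theta>) (det (trig_Q n Q \<theta>)))
      \<le> liminf (\<lambda>k. intT (\<lambda>\<theta>. J_scalar CARD('m) (trig_p n (P k) \<theta>) (det (trig_Q n (QQ k) \<theta>))))"
proof -
  define N where "N = CARD('m)"
  obtain K D where K: "K \<ge> 0" "\<And>k \<theta>. trig_p n (P k) \<theta> \<le> K" "\<And>\<theta>. trig_p n p \<theta> \<le> K"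
    and D: "D \<ge> 1" "\<And>k \<theta>. Re (det (trig_Q n (QQ k) \<theta>)) \<le> D" "\<And>\<theta>. Re (det (trig_Q n Q \<theta>)) \<le> D"
    using trig_bounds_of_convergent[OF conv] by metis
  define C where "C = 2 * real N * sqrt K + K * ln D + real N * K"
  have "C \<ge> 0" using K(1) D(1) unfolding C_def by simp
  have ge_seq: "- ereal C \<le> J_scalar N (trig_p n (P k) \<theta>) (det (trig_Q n (QQ k) \<theta>))"
    and ge_lim: "- ereal C \<le> J_scalar N (trig_p n p \<theta>) (det (trig_Q n Q \<theta>))"
    if "\<theta> \<in> period_interval" for k \<theta>
    using that Bo_bar_trig_p_nonneg Bm_bar_det_trig_Q_nonneg mem K D unfolding C_def
    by (blast intro: J_scalar_ge_const)+
  show ?thesis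
  proof (rule that)
    show "- ereal C \<le> intT (\<lambda>\<theta>. J_scalar CARD('m) (trig_p n (P k) \<theta>) (det (trig_Q n (QQ k) \<theta>)))" for k
      using \<open>C \<ge> 0\<close> ge_seq unfolding N_def by (intro intT_ge) auto
    show "intT (\<lambda>\<theta>. J_scalar CARD('m) (trig_p n p \<theta>) (det (trig_Q n Q \<theta>)))
      \<le> liminf (\<lambda>k. intT (\<lambda>\<theta>. J_scalar CARD('m) (trig_p n (P k) \<theta>) (det (trig_Q n (QQ k) \<theta>))))"
      unfolding N_def[symmetric]
    proof (rule intT_le_liminf[OF _ _ \<open>C \<ge> 0\<close> ge_seq ge_lim])
      fix \<theta> assume \<theta>: "\<theta> \<in> period_interval"
      show "J_scalar N (trig_p n p \<theta>) (det (trig_Q n Q \<theta>))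
          \<le> liminf (\<lambda>k. J_scalar N (trig_p n (P k) \<theta>) (det (trig_Q n (QQ k) \<theta>)))"
        using Bo_bar_trig_p_nonneg[OF mem(1) \<theta>] Bm_bar_det_trig_Q_nonneg[OF mem(2) \<theta>]
          Bo_bar_trig_p_nonneg[OF mem(3) \<theta>] Bm_bar_det_trig_Q_nonneg[OF mem(4) \<theta>] D
        by (intro J_scalar_le_liminf[OF tendsto_trig_p[OF conv(1)] tendsto_det_trig_Q[OF conv(2)]]) auto
    qed auto
  qed
qed

lemma intT_inv_scalar_nonneg: "0 \<le> intT (\<lambda>\<theta>. inv_scalar (trig_p n p \<theta>))"
  using intT_ge[of _ 0] inv_scalar_nonneg by (simp add: zero_ereal_def)

lemma intT_inv_scalar_le_liminf:
  assumes "P \<longlonglongrightarrow> p" "\<And>k. P k \<in> Bo_bar n" "p \<in> Bo_bar n"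
  shows "intT (\<lambda>\<theta>. inv_scalar (trig_p n p \<theta>)) \<le> liminf (\<lambda>k. intT (\<lambda>\<theta>. inv_scalar (trig_p n (P k) \<theta>)))"
proof (rule intT_le_liminf[where C=0])
  fix \<theta> assume "\<theta> \<in> period_interval"
  then have "(\<lambda>k. inv_scalar (trig_p n (P k) \<theta>)) \<longlonglongrightarrow> inv_scalar (trig_p n p \<theta>)"
    using assms Bo_bar_trig_p_nonneg by (intro tendsto_inv_scalar tendsto_trig_p) auto
  then show "inv_scalar (trig_p n p \<theta>) \<le> liminf (\<lambda>k. inv_scalar (trig_p n (P k) \<theta>))"
    by (simp add: lim_imp_Liminf)
qed (auto simp: inv_scalar_nonneg zero_ereal_def[symmetric])

lemma J_tilde_le_liminf:
  fixes QQ :: "nat \<Rightarrow> nat \<Rightarrow> real^'m^'m"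
  assumes conv: "P \<longlonglongrightarrow> p" "QQ \<longlonglongrightarrow> Q"
    and mem: "\<And>k. P k \<in> Bo_bar n" "\<And>k. QQ k \<in> Bm_bar n E" "p \<in> Bo_bar n" "Q \<in> Bm_bar n E"
    and "lam \<ge> 0"
  shows "J_tilde n R c lam (p, Q) \<le> liminf (\<lambda>k. J_tilde n R c lam (P k, QQ k))"
proof -
  define U where "U k = intT (\<lambda>\<theta>. J_scalar CARD('m) (trig_p n (P k) \<theta>) (det (trig_Q n (QQ k) \<theta>)))" for k
  define L where "L k = ereal (lin_term n R c (P k) (QQ k))" for k
  define H where "H k = ereal lam * intT (\<lambda>\<theta>. inv_scalar (trig_p n (P k) \<theta>))" for k
  obtain C where U: "\<And>k. - ereal C \<le> U k"
    "intT (\<lambda>\<theta>. J_scalar CARD('m) (trig_p n p \<theta>) (det (trig_Q n Q \<theta>))) \<le> liminf U"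
    using intT_J_scalar_le_liminf[OF conv mem] unfolding U_def by metis
  have U_ge: "- ereal C \<le> liminf U" using U(1) by (intro Liminf_bounded) auto
  have "L \<longlonglongrightarrow> ereal (lin_term n R c p Q)"
    unfolding L_def by (intro tendsto_ereal tendsto_lin_term conv)
  then have L: "liminf L = ereal (lin_term n R c p Q)" by (simp add: lim_imp_Liminf)
  have "liminf H = ereal lam * liminf (\<lambda>k. intT (\<lambda>\<theta>. inv_scalar (trig_p n (P k) \<theta>)))"
    unfolding H_def using \<open>lam \<ge> 0\<close> by (intro Liminf_ereal_mult_left) auto
  moreover have "0 \<le> liminf (\<lambda>k. intT (\<lambda>\<theta>. inv_scalar (trig_p n (P k) \<theta>)))"
    by (intro Liminf_bounded) (auto simp: intT_inv_scalar_nonneg)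
  ultimately have H: "ereal lam * intT (\<lambda>\<theta>. inv_scalar (trig_p n p \<theta>)) \<le> liminf H" "0 \<le> liminf H"
    using intT_inv_scalar_le_liminf[OF conv(1) mem(1,3)] \<open>lam \<ge> 0\<close>
    by (auto intro: ereal_mult_left_mono order_trans)
  have "- ereal C + ereal (lin_term n R c p Q) \<le> liminf (\<lambda>k. U k + L k)"
    using U_ge L by (intro ereal_le_liminf_add) auto
  then have "liminf (\<lambda>k. U k + L k) \<noteq> - \<infinity>" by auto
  then have "J_tilde n R c lam (p, Q) \<le> liminf (\<lambda>k. (U k + L k) + H k)"
    unfolding J_tilde_eq using U(2) U_ge L H
    by (intro ereal_le_liminf_add ereal_le_liminf_add) auto
  then show ?thesis by (simp add: J_tilde_eq U_def L_def H_def)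
qed

theorem proposition2:
  fixes n :: nat and E :: "('m::finite \<times> 'm) set"
    and R :: "nat \<Rightarrow> real^'m^'m" and c :: "nat \<Rightarrow> real" and lam :: real
  assumes "n \<ge> 1"
    and "sym E" and "\<forall>j. (j, j) \<in> E"
    and "transpose (R 0) = R 0"
    and "lam > 0"
  shows "lsc_on (Bo_bar n \<times> Bm_bar n E) (J_tilde n R c lam)"
proof (rule lsc_onI_sequentially)
  fix X x assume X: "\<And>k. X k \<in> Bo_bar n \<times> Bm_bar n E" and x: "x \<in> Bo_bar n \<times> Bm_bar n E"
    and "X \<longlonglongrightarrow> x"
  have "J_tilde n R c lam (fst x, snd x) \<le> liminf (\<lambda>k. J_tilde n R c lam (fst (X k), snd (X k)))"
    using X x \<open>lam > 0\<close>
    by (intro J_tilde_le_liminf tendsto_fst tendsto_snd \<open>X \<longlonglongrightarrow> x\<close>) (auto simp: mem_Times_iff)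
  then show "J_tilde n R c lam x \<le> liminf (\<lambda>k. J_tilde n R c lam (X k))" by simp
qed

end
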